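(* Let $G$ be a discrete group. If every countable subgroup $H$ of $G$ satisfies the $\ell^1$ Bass conjecture (i.e. $HS^1:K_0(\ell^1(H))\to\ell^1([H])$ takes values in $\bigoplus_{\mathrm{FC}(H)}\mathbb{C}$), then $G$ satisfies the $\ell^1$ Bass conjecture, i.e. $HS^1:K_0(\ell^1(G))\to\ell^1([G])$ takes values in $\bigoplus_{\mathrm{FC}(G)}\mathbb{C}$.
   Context: For a discrete group $G$: $[G]$ is the set of conjugacy classes, $\mathrm{FC}(G)\subset[G]$ those of elements of finite order; $\ell^1(G)$ is the Banach convolution algebra of absolutely summable functions $G\to\mathbb{C}$, written $a=\sum a_g g$; $\ell^1([G])$ is the Banach space of absolutely summable functions on $[G]$. The trace $p:\ell^1(G)\to\ell^1([G])$, $p(a)=\sum_{[x]}\big(\sum_{g\in[x]}a_g\big)[x]$, induces the $\ell^1$ Hattori–Stallings trace $HS^1:K_0(\ell^1(G))\to\ell^1([G])$ (evaluate $p$ on the trace of an idempotent matrix representing a finitely generated projective module). *)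

theory Defs
  imports "HOL-Algebra.Group" "HOL-Analysis.Infinite_Sum"
begin

text \<open>Everything is relative to a subgroup S of the group G: the group structure on S
is the one inherited from G.\<close>

definition l1 :: "'a set \<Rightarrow> ('a \<Rightarrow> complex) \<Rightarrow> bool" where
  "l1 S a \<longleftrightarrow> (\<forall>g. g \<notin> S \<longrightarrow> a g = 0) \<and> a abs_summable_on S"

definition conv :: "('a, 'b) monoid_scheme \<Rightarrow> 'a set \<Rightarrow> ('a \<Rightarrow> complex) \<Rightarrow> ('a \<Rightarrow> complex) \<Rightarrow> ('a \<Rightarrow> complex)" where
  "conv G S a b = (\<lambda>g. if g \<in> S then (\<Sum>\<^sub>\<infinity>h\<in>S. a h * b (inv\<^bsub>G\<^esub> h \<otimes>\<^bsub>G\<^esub> g)) else 0)"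

definition idem_matrix :: "('a, 'b) monoid_scheme \<Rightarrow> 'a set \<Rightarrow> nat \<Rightarrow> (nat \<Rightarrow> nat \<Rightarrow> 'a \<Rightarrow> complex) \<Rightarrow> bool" where
  "idem_matrix G S n e \<longleftrightarrow>
     (\<forall>i<n. \<forall>j<n. l1 S (e i j)) \<and>
     (\<forall>i<n. \<forall>j<n. (\<forall>g. (\<Sum>k<n. conv G S (e i k) (e k j) g) = e i j g))"

definition conj_class :: "('a, 'b) monoid_scheme \<Rightarrow> 'a set \<Rightarrow> 'a \<Rightarrow> 'a set" where
  "conj_class G S x = {h \<otimes>\<^bsub>G\<^esub> x \<otimes>\<^bsub>G\<^esub> inv\<^bsub>G\<^esub> h | h. h \<in> S}"

text \<open>The trace p : l1(S) -> l1([S]), evaluated at a conjugacy class c.\<close>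
definition ptrace :: "('a \<Rightarrow> complex) \<Rightarrow> 'a set \<Rightarrow> complex" where
  "ptrace a c = (\<Sum>\<^sub>\<infinity>g\<in>c. a g)"

definition fin_order :: "('a, 'b) monoid_scheme \<Rightarrow> 'a \<Rightarrow> bool" where
  "fin_order G x \<longleftrightarrow> (\<exists>m::nat. m > 0 \<and> x [^]\<^bsub>G\<^esub> m = \<one>\<^bsub>G\<^esub>)"

text \<open>HS^1 of the projective module given by the idempotent matrix e: p(trace e).\<close>
definition HS1 :: "('a, 'b) monoid_scheme \<Rightarrow> 'a set \<Rightarrow> nat \<Rightarrow> (nat \<Rightarrow> nat \<Rightarrow> 'a \<Rightarrow> complex) \<Rightarrow> 'a set \<Rightarrow> complex" where
  "HS1 G S n e = ptrace (\<lambda>g. \<Sum>i<n. e i i g)"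

text \<open>The l1 Bass conjecture for (the subgroup) S: HS^1 takes values in the direct
sum over FC(S) of C, i.e. HS^1 of every idempotent matrix is finitely supported on
conjugacy classes, and supported on classes of elements of finite order.\<close>
definition l1_bass :: "('a, 'b) monoid_scheme \<Rightarrow> 'a set \<Rightarrow> bool" where
  "l1_bass G S \<longleftrightarrow>
     (\<forall>n e. idem_matrix G S n e \<longrightarrow>
        finite {c \<in> conj_class G S ` S. HS1 G S n e c \<noteq> 0} \<and>
        (\<forall>c \<in> conj_class G S ` S. HS1 G S n e c \<noteq> 0 \<longrightarrow> (\<forall>x\<in>c. fin_order G x)))"

end

theory Submission
  imports Defs "HOL-Algebra.Generated_Groups"
begin

(* Let e be an idempotent n x n matrix over l1(G). Each entry is absolutely summable, so
   has countable support; the subgroup H generated by all these supports is countable,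
   and e is already an idempotent matrix over l1(H) (convolutions only see H). Put
   t = trace of e; then HS^1(e) is the class function c |-> sum of t over c, for G as
   well as for H. Since t vanishes outside H and every G-conjugacy class c meets H in
   a disjoint union of H-conjugacy classes, the value of HS^1 at c is the sum of its
   values at the H-classes inside c. Hence a G-class with non-zero trace contains an
   H-class with non-zero trace: the non-zero G-classes are images of the finitely many
   non-zero H-classes, and they consist of elements of finite order, this property
   being invariant under conjugation. *)


lemma summable_on_finite_sum:
  fixes f :: "'i \<Rightarrow> 'a \<Rightarrow> 'b::{topological_comm_monoid_add, t2_space}"
  assumes "finite I" and "\<And>i. i \<in> I \<Longrightarrow> f i summable_on A"
  shows "(\<lambda>x. \<Sum>i\<in>I. f i x) summable_on A"
  using assms by (induction I rule: finite_induct) (auto intro: summable_on_add)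

lemma infsum_disjoint_Union:
  fixes f :: "'a \<Rightarrow> 'c::banach"
  assumes "f summable_on (\<Union>D)"
    and "\<And>d d'. d \<in> D \<Longrightarrow> d' \<in> D \<Longrightarrow> d \<noteq> d' \<Longrightarrow> d \<inter> d' = {}"
  shows "infsum f (\<Union>D) = (\<Sum>\<^sub>\<infinity>d\<in>D. infsum f d)"
proof -
  have inj: "inj_on snd (Sigma D (\<lambda>d. d))"
    using assms(2) by (force simp: inj_on_def)
  have img: "snd ` Sigma D (\<lambda>d. d) = \<Union>D" by force
  have "(f \<circ> snd) summable_on (Sigma D (\<lambda>d. d))"
    using summable_on_reindex[OF inj, of f] assms(1) img by simp
  moreover have "infsum f (\<Union>D) = infsum (f \<circ> snd) (Sigma D (\<lambda>d. d))"
    using infsum_reindex[OF inj] img by simp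
  ultimately show ?thesis
    using infsum_Sigma'_banach[of "\<lambda>d x. f x" D "\<lambda>d. d"]
    by (simp add: case_prod_unfold o_def)
qed


context group
begin

lemma conj_class_subset_carrier:
  "subgroup S G \<Longrightarrow> y \<in> carrier G \<Longrightarrow> conj_class G S y \<subseteq> carrier G"
  unfolding conj_class_def by (auto dest: subgroup.mem_carrier)

lemma conj_class_self: "subgroup S G \<Longrightarrow> y \<in> carrier G \<Longrightarrow> y \<in> conj_class G S y"
  unfolding conj_class_def by (force intro: subgroup.one_closed)

lemma conj_class_subset_subgroup: "subgroup S G \<Longrightarrow> y \<in> S \<Longrightarrow> conj_class G S y \<subseteq> S"
  unfolding conj_class_def by (auto intro: subgroup.m_closed subgroup.m_inv_closed)

lemma conj_class_mono: "S \<subseteq> T \<Longrightarrow> conj_class G S y \<subseteq> conj_class G T y"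
  unfolding conj_class_def by auto

lemma conj_conj:
  assumes "k \<in> carrier G" "h \<in> carrier G" "y \<in> carrier G"
  shows "k \<otimes> (h \<otimes> y \<otimes> inv h) \<otimes> inv k = (k \<otimes> h) \<otimes> y \<otimes> inv (k \<otimes> h)"
  using assms by (simp add: inv_mult_group m_assoc)

lemma conj_class_trans:
  assumes S: "subgroup S G" and y: "y \<in> carrier G"
    and z: "z \<in> conj_class G S y" and w: "w \<in> conj_class G S z"
  shows "w \<in> conj_class G S y"
proof -
  obtain h k where h: "h \<in> S" "z = h \<otimes> y \<otimes> inv h" and k: "k \<in> S" "w = k \<otimes> z \<otimes> inv k"
    using z w unfolding conj_class_def by blast
  have "w = (k \<otimes> h) \<otimes> y \<otimes> inv (k \<otimes> h)"
    using h k y conj_conj[of k h y] subgroup.mem_carrier[OF S] by simp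
  moreover have "k \<otimes> h \<in> S" using S h k by (simp add: subgroup.m_closed)
  ultimately show ?thesis unfolding conj_class_def by blast
qed

lemma conj_class_sym:
  assumes S: "subgroup S G" and y: "y \<in> carrier G" and z: "z \<in> conj_class G S y"
  shows "y \<in> conj_class G S z"
proof -
  obtain h where h: "h \<in> S" "z = h \<otimes> y \<otimes> inv h"
    using z unfolding conj_class_def by blast
  have hc: "h \<in> carrier G" using S h by (simp add: subgroup.mem_carrier)
  have "y = inv h \<otimes> z \<otimes> inv (inv h)"
    using conj_conj[of "inv h" h y] h hc y by simp
  moreover have "inv h \<in> S" using S h by (simp add: subgroup.m_inv_closed)
  ultimately show ?thesis unfolding conj_class_def by blast
qed

lemma conj_class_eq:
  assumes S: "subgroup S G" and y: "y \<in> carrier G" and z: "z \<in> conj_class G S y"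
  shows "conj_class G S z = conj_class G S y"
proof -
  have zc: "z \<in> carrier G" using conj_class_subset_carrier[OF S y] z by blast
  show ?thesis
    using conj_class_trans[OF S y z] conj_class_trans[OF S zc conj_class_sym[OF S y z]]
    by blast
qed

lemma conj_class_saturation:
  assumes S: "subgroup S G" and T: "subgroup T G" and ST: "S \<subseteq> T" and y: "y \<in> carrier G"
  shows "(\<Union>w\<in>conj_class G S y. conj_class G T w) = conj_class G T y"
  using conj_class_eq[OF T y] conj_class_mono[OF ST] conj_class_self[OF S y] by blast

lemma conj_pow:
  assumes "g \<in> carrier G" "y \<in> carrier G"
  shows "(g \<otimes> y \<otimes> inv g) [^] (m::nat) = g \<otimes> y [^] m \<otimes> inv g"
proof (induction m)
  case (Suc m)
  have "(g \<otimes> y \<otimes> inv g) [^] Suc m = (g \<otimes> y [^] m \<otimes> inv g) \<otimes> (g \<otimes> y \<otimes> inv g)"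
    using Suc by simp
  also have "\<dots> = g \<otimes> (y [^] m \<otimes> y) \<otimes> inv g"
    using assms by (simp add: m_assoc[symmetric]) (simp add: m_assoc)
  finally show ?case by (simp add: nat_pow_Suc)
qed (use assms in simp)

lemma fin_order_conj_class:
  assumes S: "subgroup S G" and y: "y \<in> carrier G" and "fin_order G y"
    and z: "z \<in> conj_class G S y"
  shows "fin_order G z"
proof -
  obtain h where h: "h \<in> S" "z = h \<otimes> y \<otimes> inv h"
    using z unfolding conj_class_def by blast
  then have "h \<in> carrier G" using S by (simp add: subgroup.mem_carrier)
  then show ?thesis
    using \<open>fin_order G y\<close> h(2) conj_pow[OF _ y] unfolding fin_order_def by auto
qed

lemma generate_subset_products:
  assumes A: "A \<subseteq> carrier G"
  shows "generate G A \<subseteq> (\<lambda>l. foldr (\<otimes>) l \<one>) ` lists (A \<union> (\<lambda>a. inv a) ` A)"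
proof
  have prod_carrier: "foldr (\<otimes>) l \<one> \<in> carrier G" if "set l \<subseteq> carrier G" for l
    using that by (induction l) auto
  have prod_append: "foldr (\<otimes>) (xs @ ys) \<one> = foldr (\<otimes>) xs \<one> \<otimes> foldr (\<otimes>) ys \<one>"
    if "set xs \<subseteq> carrier G" "set ys \<subseteq> carrier G" for xs ys
    using that by (induction xs) (auto simp: m_assoc prod_carrier)
  fix x assume "x \<in> generate G A"
  then show "x \<in> (\<lambda>l. foldr (\<otimes>) l \<one>) ` lists (A \<union> (\<lambda>a. inv a) ` A)"
  proof (induction rule: generate.induct)
    case one then show ?case by (intro image_eqI[of _ _ "[]"]) auto
  next
    case (incl h) then show ?case using A by (intro image_eqI[of _ _ "[h]"]) auto
  next
    case (inv h) then show ?case using A by (intro image_eqI[of _ _ "[inv h]"]) auto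
  next
    case (eng h1 h2)
    then obtain xs ys where l: "xs \<in> lists (A \<union> (\<lambda>a. inv a) ` A)" "h1 = foldr (\<otimes>) xs \<one>"
        "ys \<in> lists (A \<union> (\<lambda>a. inv a) ` A)" "h2 = foldr (\<otimes>) ys \<one>"
      by auto
    have "set xs \<subseteq> carrier G" "set ys \<subseteq> carrier G"
      using l(1,3) A inv_closed by blast+
    then have "h1 \<otimes> h2 = foldr (\<otimes>) (xs @ ys) \<one>"
      using l(2,4) prod_append by simp
    moreover have "xs @ ys \<in> lists (A \<union> (\<lambda>a. inv a) ` A)" using l(1,3) by simp
    ultimately show ?case by (rule image_eqI)
  qed
qed

lemma countable_generate:
  assumes "A \<subseteq> carrier G" and "countable A"
  shows "countable (generate G A)"
  using countable_subset[OF generate_subset_products[OF assms(1)]] assms(2) by simp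

lemma countable_subgroup_supporting:
  assumes "finite I" and l1: "\<And>i. i \<in> I \<Longrightarrow> l1 (carrier G) (a i)"
  obtains H where "subgroup H G" "countable H" "\<And>i g. i \<in> I \<Longrightarrow> g \<notin> H \<Longrightarrow> a i g = 0"
proof -
  define A where "A = (\<Union>i\<in>I. {g \<in> carrier G. a i g \<noteq> 0})"
  have A: "A \<subseteq> carrier G" unfolding A_def by auto
  have "countable A"
    unfolding A_def using \<open>finite I\<close>
  proof (intro countable_UN)
    fix i assume "i \<in> I"
    then show "countable {g \<in> carrier G. a i g \<noteq> 0}"
      using l1 abs_summable_countable unfolding l1_def by blast
  qed (simp add: countable_finite)
  show ?thesis
  proof
    show "subgroup (generate G A) G" using A by (rule generate_is_subgroup)
    show "countable (generate G A)" using A \<open>countable A\<close> by (rule countable_generate)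
    show "a i g = 0" if "i \<in> I" "g \<notin> generate G A" for i g
      using that l1[OF that(1)] generate.incl[of g A G] unfolding A_def l1_def by auto
  qed
qed

end


lemma l1_restrict:
  assumes "l1 T a" "S \<subseteq> T" "\<And>g. g \<notin> S \<Longrightarrow> a g = 0"
  shows "l1 S a"
  using assms summable_on_subset_banach unfolding l1_def by blast

lemma conv_restrict:
  assumes "H \<subseteq> carrier G" "\<And>h. h \<notin> H \<Longrightarrow> a h = 0" "g \<in> H"
  shows "conv G H a b g = conv G (carrier G) a b g"
proof -
  have "(\<Sum>\<^sub>\<infinity>h\<in>H. a h * b (inv\<^bsub>G\<^esub> h \<otimes>\<^bsub>G\<^esub> g))
      = (\<Sum>\<^sub>\<infinity>h\<in>carrier G. a h * b (inv\<^bsub>G\<^esub> h \<otimes>\<^bsub>G\<^esub> g))"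
    using assms(1,2) by (intro infsum_cong_neutral) auto
  then show ?thesis unfolding conv_def using assms(1,3) by auto
qed

lemma idem_matrix_restrict:
  assumes e: "idem_matrix G (carrier G) n e" and H: "H \<subseteq> carrier G"
    and supp: "\<And>i j g. i < n \<Longrightarrow> j < n \<Longrightarrow> g \<notin> H \<Longrightarrow> e i j g = 0"
  shows "idem_matrix G H n e"
  unfolding idem_matrix_def
proof (intro conjI allI impI)
  fix i j assume ij: "i < n" "j < n"
  have "l1 (carrier G) (e i j)" using e ij unfolding idem_matrix_def by blast
  then show "l1 H (e i j)" using H supp[OF ij] by (rule l1_restrict)
  fix g
  have idem: "(\<Sum>k<n. conv G (carrier G) (e i k) (e k j) g) = e i j g"
    using e ij unfolding idem_matrix_def by blast
  show "(\<Sum>k<n. conv G H (e i k) (e k j) g) = e i j g"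
  proof (cases "g \<in> H")
    case True
    have "conv G H (e i k) (e k j) g = conv G (carrier G) (e i k) (e k j) g" if "k < n" for k
      using H supp[OF ij(1) that] True by (rule conv_restrict)
    then show ?thesis using idem by simp
  next
    case False
    then show ?thesis using supp[OF ij False] unfolding conv_def by simp
  qed
qed

lemma trace_summable:
  assumes "idem_matrix G S n e"
  shows "(\<lambda>g. \<Sum>i<n. e i i g) summable_on S"
proof (rule summable_on_finite_sum)
  fix i assume "i \<in> {..<n}"
  then have "l1 S (e i i)" using assms unfolding idem_matrix_def by blast
  then show "e i i summable_on S" unfolding l1_def by (blast intro: abs_summable_summable)
qed simp


context group
begin

lemma idem_matrix_countable_reduction:
  assumes e: "idem_matrix G (carrier G) n e"
  obtains H where "subgroup H G" "countable H" "idem_matrix G H n e"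
    "\<And>i j g. i < n \<Longrightarrow> j < n \<Longrightarrow> g \<notin> H \<Longrightarrow> e i j g = 0"
proof -
  have l1: "l1 (carrier G) (case_prod e p)" if "p \<in> {..<n} \<times> {..<n}" for p
    using e that unfolding idem_matrix_def by auto
  obtain H where H: "subgroup H G" "countable H"
    and supp: "\<And>p g. p \<in> {..<n} \<times> {..<n} \<Longrightarrow> g \<notin> H \<Longrightarrow> case_prod e p g = 0"
  proof (rule countable_subgroup_supporting[of "{..<n} \<times> {..<n}" "case_prod e"])
    show "finite ({..<n} \<times> {..<n})" by simp
    show "l1 (carrier G) (case_prod e p)" if "p \<in> {..<n} \<times> {..<n}" for p
      using that by (rule l1)
  qed (rule that)
  have e_supp: "e i j g = 0" if "i < n" "j < n" "g \<notin> H" for i j g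
    using supp[of "(i, j)" g] that by simp
  have "idem_matrix G H n e"
    using e subgroup.subset[OF H(1)] e_supp by (rule idem_matrix_restrict)
  from H this e_supp show ?thesis by (rule that)
qed

(* Class sums over G decompose into class sums over a subgroup H carrying the function:
   the G-class c meets H in the disjoint union of the H-classes of its members in H. *)
lemma ptrace_class_decomposition:
  assumes H: "subgroup H G" and t: "t summable_on carrier G"
    and supp: "\<And>g. g \<notin> H \<Longrightarrow> t g = 0" and x: "x \<in> carrier G"
  shows "ptrace t (conj_class G (carrier G) x)
       = (\<Sum>\<^sub>\<infinity>d\<in>conj_class G H ` (conj_class G (carrier G) x \<inter> H). ptrace t d)"
proof -
  define c where "c = conj_class G (carrier G) x"
  define D where "D = conj_class G H ` (c \<inter> H)"
  have G: "subgroup (carrier G) G" by (rule subgroup_self)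
  have HG: "H \<subseteq> carrier G" using H by (rule subgroup.subset)
  have c: "c \<subseteq> carrier G" unfolding c_def by (rule conj_class_subset_carrier[OF G x])
  have UD: "\<Union>D = c \<inter> H"
  proof
    show "\<Union>D \<subseteq> c \<inter> H"
      using conj_class_subset_subgroup[OF H] conj_class_mono[OF HG] conj_class_trans[OF G x]
      unfolding D_def c_def by blast
    show "c \<inter> H \<subseteq> \<Union>D"
      using conj_class_self[OF H] c unfolding D_def by blast
  qed
  have disjoint: "d \<inter> d' = {}" if "d \<in> D" "d' \<in> D" "d \<noteq> d'" for d d'
    using that c conj_class_eq[OF H] unfolding D_def by blast
  have "ptrace t c = infsum t (c \<inter> H)"
    unfolding ptrace_def using supp by (intro infsum_cong_neutral) auto
  also have "\<dots> = (\<Sum>\<^sub>\<infinity>d\<in>D. infsum t d)"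
    unfolding UD[symmetric] using UD c disjoint
    by (intro infsum_disjoint_Union summable_on_subset_banach[OF t]) auto
  finally show ?thesis unfolding c_def D_def ptrace_def .
qed

lemma nonzero_class_contains_nonzero_subclass:
  assumes H: "subgroup H G" and t: "t summable_on carrier G"
    and supp: "\<And>g. g \<notin> H \<Longrightarrow> t g = 0" and x: "x \<in> carrier G"
    and nz: "ptrace t (conj_class G (carrier G) x) \<noteq> 0"
  obtains y where "y \<in> H" "y \<in> conj_class G (carrier G) x" "ptrace t (conj_class G H y) \<noteq> 0"
proof -
  have "\<exists>d\<in>conj_class G H ` (conj_class G (carrier G) x \<inter> H). ptrace t d \<noteq> 0"
    using nz ptrace_class_decomposition[OF assms(1-4)] infsum_0 by metis
  then show ?thesis using that by blast
qed

(* Transfer of finiteness: each G-class with non-zero class sum is the saturation of an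
   H-class with non-zero class sum, so there are only finitely many of them. *)
lemma finite_nonzero_classes_transfer:
  assumes H: "subgroup H G" and t: "t summable_on carrier G"
    and supp: "\<And>g. g \<notin> H \<Longrightarrow> t g = 0"
    and fin: "finite {d \<in> conj_class G H ` H. ptrace t d \<noteq> 0}"
  shows "finite {c \<in> conj_class G (carrier G) ` carrier G. ptrace t c \<noteq> 0}"
proof -
  have G: "subgroup (carrier G) G" by (rule subgroup_self)
  have HG: "H \<subseteq> carrier G" using H by (rule subgroup.subset)
  have "{c \<in> conj_class G (carrier G) ` carrier G. ptrace t c \<noteq> 0}
      \<subseteq> (\<lambda>d. \<Union>w\<in>d. conj_class G (carrier G) w) ` {d \<in> conj_class G H ` H. ptrace t d \<noteq> 0}"
  proof
    fix c assume "c \<in> {c \<in> conj_class G (carrier G) ` carrier G. ptrace t c \<noteq> 0}"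
    then obtain x where x: "x \<in> carrier G" and c: "c = conj_class G (carrier G) x"
      and nz: "ptrace t (conj_class G (carrier G) x) \<noteq> 0"
      by blast
    obtain y where y: "y \<in> H" "y \<in> conj_class G (carrier G) x" "ptrace t (conj_class G H y) \<noteq> 0"
      by (rule nonzero_class_contains_nonzero_subclass[OF H t supp x nz])
    have yc: "y \<in> carrier G" using HG y(1) by blast
    have "c = conj_class G (carrier G) y"
      using conj_class_eq[OF G x y(2)] c by simp
    also have "\<dots> = (\<Union>w\<in>conj_class G H y. conj_class G (carrier G) w)"
      by (rule conj_class_saturation[OF H G HG yc, symmetric])
    finally show "c \<in> (\<lambda>d. \<Union>w\<in>d. conj_class G (carrier G) w) ` {d \<in> conj_class G H ` H. ptrace t d \<noteq> 0}"
      using y(1,3) by blast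
  qed
  then show ?thesis using finite_surj[OF fin] by blast
qed

(* Transfer of finite order: a G-class with non-zero class sum is conjugate to a member
   of an H-class with non-zero class sum, whose elements have finite order. *)
lemma fin_order_classes_transfer:
  assumes H: "subgroup H G" and t: "t summable_on carrier G"
    and supp: "\<And>g. g \<notin> H \<Longrightarrow> t g = 0"
    and fo: "\<forall>d \<in> conj_class G H ` H. ptrace t d \<noteq> 0 \<longrightarrow> (\<forall>x\<in>d. fin_order G x)"
  shows "\<forall>c \<in> conj_class G (carrier G) ` carrier G. ptrace t c \<noteq> 0 \<longrightarrow> (\<forall>z\<in>c. fin_order G z)"
proof (intro ballI impI)
  fix c z assume c: "c \<in> conj_class G (carrier G) ` carrier G" and nz: "ptrace t c \<noteq> 0"
    and z: "z \<in> c"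
  have G: "subgroup (carrier G) G" by (rule subgroup_self)
  obtain x where x: "x \<in> carrier G" and cx: "c = conj_class G (carrier G) x" using c by blast
  obtain y where y: "y \<in> H" "y \<in> c" "ptrace t (conj_class G H y) \<noteq> 0"
    using nonzero_class_contains_nonzero_subclass[OF H t supp x] nz cx by blast
  have yc: "y \<in> carrier G" using H y(1) by (simp add: subgroup.mem_carrier)
  have "fin_order G y" using fo y(1,3) conj_class_self[OF H yc] by blast
  moreover have "z \<in> conj_class G (carrier G) y"
    using conj_class_eq[OF G x] cx y(2) z by simp
  ultimately show "fin_order G z" by (rule fin_order_conj_class[OF G yc])
qed

end


theorem lemma1p5:
  fixes G :: "('a, 'b) monoid_scheme"
  assumes "group G"
    and "\<And>H. subgroup H G \<Longrightarrow> countable H \<Longrightarrow> l1_bass G H"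
  shows "l1_bass G (carrier G)"
  unfolding l1_bass_def
proof (intro allI impI)
  interpret group G by (rule assms(1))
  fix n e assume e: "idem_matrix G (carrier G) n e"
  obtain H where H: "subgroup H G" "countable H" and eH: "idem_matrix G H n e"
    and supp: "\<And>i j g. i < n \<Longrightarrow> j < n \<Longrightarrow> g \<notin> H \<Longrightarrow> e i j g = 0"
    by (rule idem_matrix_countable_reduction[OF e]) (rule that)
  define t where "t = (\<lambda>g. \<Sum>i<n. e i i g)"
  have HS1_t: "HS1 G S n e = ptrace t" for S unfolding HS1_def t_def ..
  have t: "t summable_on carrier G" unfolding t_def using e by (rule trace_summable)
  have t_supp: "t g = 0" if "g \<notin> H" for g unfolding t_def using supp that by simp
  have bass_H: "finite {d \<in> conj_class G H ` H. HS1 G H n e d \<noteq> 0}"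
    "\<forall>d \<in> conj_class G H ` H. HS1 G H n e d \<noteq> 0 \<longrightarrow> (\<forall>x\<in>d. fin_order G x)"
    using assms(2)[OF H] eH unfolding l1_bass_def by blast+
  show "finite {c \<in> conj_class G (carrier G) ` carrier G. HS1 G (carrier G) n e c \<noteq> 0}
    \<and> (\<forall>c \<in> conj_class G (carrier G) ` carrier G. HS1 G (carrier G) n e c \<noteq> 0
         \<longrightarrow> (\<forall>x\<in>c. fin_order G x))"
    unfolding HS1_t
    using finite_nonzero_classes_transfer[OF H(1) t t_supp bass_H(1)[unfolded HS1_t]]
      fin_order_classes_transfer[OF H(1) t t_supp bass_H(2)[unfolded HS1_t]] ..
qed

end
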